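(* The set of properties $\{AL, BR, ER, \{1\}\}$ is query-complete, where $AL$ is the set of alternating permutations, $BR$ is the set of permutations $\pi$ with $\pi(1)<\pi(2)$, $ER$ is the set of permutations $\pi$ of length $n$ with $\pi(n-1)<\pi(n)$, and $\{1\}$ is the set containing only the permutation of length 1.
   Context: A permutation $\pi$ of length $n$ is alternating if for every $i\in[2,n-1]$, $\pi(i)$ does not lie between $\pi(i-1)$ and $\pi(i+1)$. An interval of a permutation is a set of contiguous positions whose values form a contiguous set; a permutation of length $n$ is simple if its only intervals have sizes $0,1,n$. Given a permutation $\sigma$ of length $m$ and nonempty permutations $\alpha_1,\dots,\alpha_m$, the inflation $\sigma[\alpha_1,\dots,\alpha_m]$ is the permutation obtained by replacing each entry $\sigma(i)$ by an interval order isomorphic to $\alpha_i$, these intervals being in the relative order given by $\sigma$ (e.g. $2413[1,132,321,12]=479832156$). A property is any set of permutations; $\pi$ satisfies property $P$ if $\pi\in P$. A set $\mathcal{P}$ of properties is query-complete if, for every simple permutation $\sigma$ (of length $m$) and every $P\in\mathcal{P}$, whether $\sigma[\alpha_1,\dots,\alpha_m]$ satisfies $P$ is determined by $\sigma$ together with knowledge of which properties of $\mathcal{P}$ each $\alpha_i$ satisfies. *)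

theory Defs
  imports Main
begin

text \<open>Permutations of length n are represented as lists of the values 0..n-1
  (0-based one-line notation): position i holds value xs!i.\<close>

definition is_perm :: "nat list \<Rightarrow> bool" where
  "is_perm xs \<longleftrightarrow> distinct xs \<and> set xs = {0..<length xs}"

definition is_interval :: "nat list \<Rightarrow> nat set \<Rightarrow> bool" where
  "is_interval xs I \<longleftrightarrow> I \<subseteq> {0..<length xs}
     \<and> (\<exists>a b. I = {a..<b}) \<and> (\<exists>c d. (\<lambda>i. xs ! i) ` I = {c..<d})"

definition simple_perm :: "nat list \<Rightarrow> bool" where
  "simple_perm xs \<longleftrightarrow> is_perm xs \<and>
     (\<forall>I. is_interval xs I \<longrightarrow> card I \<in> {0, 1, length xs})"

text \<open>Inflation sigma[alpha_1,...,alpha_m]: block i is alpha_i shifted by the total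
  length of the blocks whose sigma-value is smaller.\<close>
definition inflate :: "nat list \<Rightarrow> nat list list \<Rightarrow> nat list" where
  "inflate \<sigma> \<alpha>s = concat (map (\<lambda>i. map (\<lambda>v. v +
       sum_list [length (\<alpha>s ! j). j \<leftarrow> [0..<length \<sigma>], \<sigma> ! j < \<sigma> ! i]) (\<alpha>s ! i))
     [0..<length \<sigma>])"

definition AL :: "nat list set" where
  "AL = {xs. is_perm xs \<and> (\<forall>i. 0 < i \<and> i + 1 < length xs \<longrightarrow>
      \<not> ((xs!(i-1) < xs!i \<and> xs!i < xs!(i+1)) \<or> (xs!(i+1) < xs!i \<and> xs!i < xs!(i-1))))}"

definition BR :: "nat list set" where
  "BR = {xs. is_perm xs \<and> 2 \<le> length xs \<and> xs!0 < xs!1}"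

definition ER :: "nat list set" where
  "ER = {xs. is_perm xs \<and> 2 \<le> length xs \<and> xs!(length xs - 2) < xs!(length xs - 1)}"

definition query_complete :: "nat list set set \<Rightarrow> bool" where
  "query_complete \<P> \<longleftrightarrow>
     (\<forall>\<sigma> P \<alpha>s \<beta>s. simple_perm \<sigma> \<and> P \<in> \<P> \<and>
        length \<alpha>s = length \<sigma> \<and> length \<beta>s = length \<sigma> \<and>
        (\<forall>\<alpha> \<in> set \<alpha>s. is_perm \<alpha> \<and> \<alpha> \<noteq> []) \<and>
        (\<forall>\<beta> \<in> set \<beta>s. is_perm \<beta> \<and> \<beta> \<noteq> []) \<and>
        (\<forall>i < length \<sigma>. \<forall>Q \<in> \<P>. (\<alpha>s ! i \<in> Q \<longleftrightarrow> \<beta>s ! i \<in> Q))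
      \<longrightarrow> (inflate \<sigma> \<alpha>s \<in> P \<longleftrightarrow> inflate \<sigma> \<beta>s \<in> P))"

text \<open>Sanity: 2413[1,132,321,12] = 479832156 (0-based: 368721045).\<close>
lemma "inflate [1,3,0,2] [[0],[0,2,1],[2,1,0],[0,1]] = [3,6,8,7,2,1,0,4,5]"
  by (simp add: inflate_def)

end

theory Submission
  imports Defs
begin

(* Record the up-down pattern of a list xs as its word of ascents
   ascents xs = [xs!0 < xs!1, xs!1 < xs!2, ...].  For a nonempty permutation, each of
   the four properties AL, BR, ER and {[0]} is a function of the profile of this word:
   whether it is empty, its first and last letters, and whether consecutive letters
   always differ (alternation).  Conversely the four properties of a permutation
   determine its profile.
   The ascent word of an inflation sigma[alpha_1,...,alpha_m] is the concatenation of the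
   ascent words of the alpha_i, separated by the letters sigma!i < sigma!(i+1): the
   blocks are shifted copies of the alpha_i lying in disjoint value ranges ordered as
   sigma.  Profiles are compositional under such concatenations, so the profile of the
   inflation -- and hence its four properties -- is determined by sigma and the
   properties of the alpha_i. *)

section \<open>Ascent words and their profiles\<close>

fun ascents :: "nat list \<Rightarrow> bool list" where
  "ascents (a # b # xs) = (a < b) # ascents (b # xs)"
| "ascents _ = []"

fun alternating_word :: "bool list \<Rightarrow> bool" where
  "alternating_word (a # b # w) = (a \<noteq> b \<and> alternating_word (b # w))"
| "alternating_word _ = True"

text \<open>The data of a word that the four properties can see.\<close>
definition profile :: "bool list \<Rightarrow> bool \<times> bool \<times> bool \<times> bool" where
  "profile w = (w = [], hd w, last w, alternating_word w)"

lemma length_ascents: "length (ascents xs) = length xs - 1"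
  by (induction xs rule: ascents.induct) auto

lemma nth_ascents: "i + 1 < length xs \<Longrightarrow> ascents xs ! i = (xs ! i < xs ! (i + 1))"
proof (induction xs arbitrary: i rule: ascents.induct)
  case (1 a b xs)
  then show ?case by (cases i) auto
qed auto

lemma ascents_shift: "ascents (map (\<lambda>v. v + c) xs) = ascents xs"
  by (induction xs rule: ascents.induct) auto

lemma ascents_append:
  "xs \<noteq> [] \<Longrightarrow> ys \<noteq> [] \<Longrightarrow> ascents (xs @ ys) = ascents xs @ (last xs < hd ys) # ascents ys"
proof (induction xs)
  case (Cons a xs)
  then show ?case by (cases xs; cases ys) auto
qed simp

lemma alternating_word_iff_nth:
  "alternating_word w \<longleftrightarrow> (\<forall>i. i + 1 < length w \<longrightarrow> w ! i \<noteq> w ! (i + 1))"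
proof (induction w rule: alternating_word.induct)
  case (1 a b w)
  have split_first: "(\<forall>i. Q i) \<longleftrightarrow> Q 0 \<and> (\<forall>i. Q (Suc i))" for Q :: "nat \<Rightarrow> bool"
    by (metis not0_implies_Suc)
  show ?case using 1 by (subst split_first) simp
qed (auto simp: less_Suc_eq)

lemma alternating_word_append:
  "alternating_word (w @ s # r) \<longleftrightarrow> alternating_word w \<and> (w \<noteq> [] \<longrightarrow> last w \<noteq> s)
     \<and> (r \<noteq> [] \<longrightarrow> s \<noteq> hd r) \<and> alternating_word r"
proof (induction w)
  case Nil
  then show ?case by (cases r) auto
next
  case (Cons a w)
  then show ?case by (cases w) auto
qed

lemma profile_append:
  "profile w1 = profile w2 \<Longrightarrow> profile r1 = profile r2 \<Longrightarrow>
   profile (w1 @ s # r1) = profile (w2 @ s # r2)"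
  unfolding profile_def using alternating_word_append[of w1 s r1] alternating_word_append[of w2 s r2]
  by (auto simp: hd_append)

lemma profile_ascents_concat:
  assumes "list_all2 (\<lambda>b c. b \<noteq> [] \<and> c \<noteq> [] \<and> profile (ascents b) = profile (ascents c)) bs cs"
    and "\<forall>i. i + 1 < length bs \<longrightarrow> (last (bs!i) < hd (bs!(i+1))) = (last (cs!i) < hd (cs!(i+1)))"
  shows "profile (ascents (concat bs)) = profile (ascents (concat cs))"
  using assms
proof (induction bs cs rule: list_all2_induct)
  case Nil
  show ?case by simp
next
  case (Cons b bs c cs)
  show ?case
  proof (cases "bs = []")
    case True
    then show ?thesis using Cons by simp
  next
    case False
    then obtain b' bs' c' cs' where bs: "bs = b' # bs'" and cs: "cs = c' # cs'"
      using Cons.hyps by (cases bs; cases cs) auto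
    have blocks: "b \<noteq> []" "c \<noteq> []" "b' \<noteq> []" "c' \<noteq> []"
      using Cons.hyps bs cs by auto
    have boundary: "(last b < hd b') = (last c < hd c')"
      using Cons.prems[rule_format, of 0] bs cs by simp
    have rest: "profile (ascents (concat bs)) = profile (ascents (concat cs))"
      using Cons.IH Cons.prems[rule_format, of "Suc _"] by simp
    show ?thesis
      using profile_append[OF _ rest, of "ascents b" "ascents c" "last b < hd b'"]
        Cons.hyps(1) boundary blocks bs cs by (simp add: ascents_append)
  qed
qed

section \<open>The four properties in terms of profiles\<close>

lemma perm_distinct: "is_perm xs \<Longrightarrow> distinct xs"
  unfolding is_perm_def by simp

lemma between_iff_equal_ascents:
  assumes "distinct xs" and "i + 2 < length xs"
  shows "((xs!i < xs!(i+1) \<and> xs!(i+1) < xs!(i+2)) \<or> (xs!(i+2) < xs!(i+1) \<and> xs!(i+1) < xs!i))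
         \<longleftrightarrow> ascents xs ! i = ascents xs ! (i+1)"
proof -
  have "xs!i \<noteq> xs!(i+1)" "xs!(i+1) \<noteq> xs!(i+2)"
    using assms by (simp_all add: nth_eq_iff_index_eq)
  then show ?thesis
    using nth_ascents[of i xs] nth_ascents[of "i+1" xs] assms(2) by (auto simp: numeral_2_eq_2)
qed

lemma all_positive_nat: "(\<forall>i::nat. 0 < i \<and> P i \<longrightarrow> Q i) \<longleftrightarrow> (\<forall>k. P (Suc k) \<longrightarrow> Q (Suc k))"
  by (metis gr0_conv_Suc zero_less_Suc)

lemma AL_iff_profile: "xs \<in> AL \<longleftrightarrow> is_perm xs \<and> alternating_word (ascents xs)"
proof (cases "is_perm xs")
  case True
  have "(\<forall>i. 0 < i \<and> i + 1 < length xs \<longrightarrow>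
          \<not> ((xs!(i-1) < xs!i \<and> xs!i < xs!(i+1)) \<or> (xs!(i+1) < xs!i \<and> xs!i < xs!(i-1))))
        \<longleftrightarrow> (\<forall>k. k + 2 < length xs \<longrightarrow>
          \<not> ((xs!k < xs!(k+1) \<and> xs!(k+1) < xs!(k+2)) \<or> (xs!(k+2) < xs!(k+1) \<and> xs!(k+1) < xs!k)))"
    unfolding all_positive_nat by (simp add: numeral_2_eq_2)
  also have "\<dots> \<longleftrightarrow> (\<forall>k. k + 1 < length (ascents xs) \<longrightarrow> ascents xs ! k \<noteq> ascents xs ! (k+1))"
  proof (intro iff_allI)
    fix k
    have "k + 1 < length (ascents xs) \<longleftrightarrow> k + 2 < length xs"
      by (simp add: length_ascents less_diff_conv)
    then show "(k + 2 < length xs \<longrightarrow> \<not> ((xs!k < xs!(k+1) \<and> xs!(k+1) < xs!(k+2)) \<or>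
                  (xs!(k+2) < xs!(k+1) \<and> xs!(k+1) < xs!k)))
          \<longleftrightarrow> (k + 1 < length (ascents xs) \<longrightarrow> ascents xs ! k \<noteq> ascents xs ! (k+1))"
      using between_iff_equal_ascents[OF perm_distinct[OF True], of k] by blast
  qed
  finally show ?thesis
    using True unfolding AL_def alternating_word_iff_nth by simp
qed (simp add: AL_def)

lemma ascents_nonempty_iff: "ascents xs \<noteq> [] \<longleftrightarrow> 2 \<le> length xs"
proof -
  have "ascents xs \<noteq> [] \<longleftrightarrow> length xs - 1 \<noteq> 0"
    by (metis length_0_conv length_ascents)
  then show ?thesis by linarith
qed

lemma BR_iff_profile: "xs \<in> BR \<longleftrightarrow> is_perm xs \<and> ascents xs \<noteq> [] \<and> hd (ascents xs)"
proof -
  have "hd (ascents xs) = (xs!0 < xs!1)" if "2 \<le> length xs"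
    using that nth_ascents[of 0 xs] ascents_nonempty_iff[of xs] by (simp add: hd_conv_nth)
  then show ?thesis unfolding BR_def ascents_nonempty_iff by auto
qed

lemma ER_iff_profile: "xs \<in> ER \<longleftrightarrow> is_perm xs \<and> ascents xs \<noteq> [] \<and> last (ascents xs)"
proof -
  have "last (ascents xs) = (xs!(length xs - 2) < xs!(length xs - 1))" if "2 \<le> length xs"
  proof -
    have "last (ascents xs) = ascents xs ! (length xs - 2)"
      using that length_ascents[of xs] by (subst last_conv_nth) (auto simp: numeral_2_eq_2)
    also have "\<dots> = (xs!(length xs - 2) < xs!(length xs - 2 + 1))"
      using that by (intro nth_ascents) simp
    finally show ?thesis using that by (simp add: numeral_2_eq_2 Suc_diff_Suc)
  qed
  then show ?thesis unfolding ER_def ascents_nonempty_iff by auto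
qed

lemma singleton_iff_profile:
  assumes "is_perm xs" and "xs \<noteq> []"
  shows "xs = [0] \<longleftrightarrow> ascents xs = []"
proof -
  have "ascents xs = [] \<longleftrightarrow> length xs = 1"
    using length_ascents[of xs] assms(2) by (cases xs) auto
  moreover have "length xs = 1 \<longleftrightarrow> xs = [0]"
    using assms(1) unfolding is_perm_def by (auto simp: length_Suc_conv)
  ultimately show ?thesis by simp
qed

lemma properties_determined_by_profile:
  assumes "is_perm \<pi>" "\<pi> \<noteq> []" "is_perm \<pi>'" "\<pi>' \<noteq> []"
    and "profile (ascents \<pi>) = profile (ascents \<pi>')"
    and "P \<in> {AL, BR, ER, {[0]}}"
  shows "\<pi> \<in> P \<longleftrightarrow> \<pi>' \<in> P"
  using assms AL_iff_profile[of \<pi>] AL_iff_profile[of \<pi>'] BR_iff_profile[of \<pi>] BR_iff_profile[of \<pi>']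
    ER_iff_profile[of \<pi>] ER_iff_profile[of \<pi>'] singleton_iff_profile[of \<pi>] singleton_iff_profile[of \<pi>']
  unfolding profile_def by auto

lemma profile_determined_by_properties:
  assumes "is_perm a" "a \<noteq> []" "is_perm b" "b \<noteq> []"
    and "\<forall>Q \<in> {AL, BR, ER, {[0]}}. a \<in> Q \<longleftrightarrow> b \<in> Q"
  shows "profile (ascents a) = profile (ascents b)"
proof -
  have "ascents a = [] \<longleftrightarrow> ascents b = []"
    using assms singleton_iff_profile[of a] singleton_iff_profile[of b] by auto
  then show ?thesis
    using assms AL_iff_profile[of a] AL_iff_profile[of b] BR_iff_profile[of a] BR_iff_profile[of b]
      ER_iff_profile[of a] ER_iff_profile[of b]
    unfolding profile_def by (cases "ascents a = []") auto
qed

section \<open>Blocks of an inflation\<close>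

definition block_offset :: "nat list \<Rightarrow> nat list list \<Rightarrow> nat \<Rightarrow> nat" where
  "block_offset \<sigma> \<alpha>s i = sum_list [length (\<alpha>s ! j). j \<leftarrow> [0..<length \<sigma>], \<sigma> ! j < \<sigma> ! i]"

definition block :: "nat list \<Rightarrow> nat list list \<Rightarrow> nat \<Rightarrow> nat list" where
  "block \<sigma> \<alpha>s i = map (\<lambda>v. v + block_offset \<sigma> \<alpha>s i) (\<alpha>s ! i)"

lemma inflate_blocks: "inflate \<sigma> \<alpha>s = concat (map (block \<sigma> \<alpha>s) [0..<length \<sigma>])"
  unfolding inflate_def block_def block_offset_def ..

lemma sum_list_comprehension: "sum_list [f j. j \<leftarrow> xs, P j] = sum_list (map f (filter P xs))"
  by (induction xs) auto

lemma block_offset_sum: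
  "block_offset \<sigma> \<alpha>s i = (\<Sum>j | j < length \<sigma> \<and> \<sigma>!j < \<sigma>!i. length (\<alpha>s ! j))"
proof -
  have "block_offset \<sigma> \<alpha>s i
          = (\<Sum>j\<in>set (filter (\<lambda>j. \<sigma> ! j < \<sigma> ! i) [0..<length \<sigma>]). length (\<alpha>s ! j))"
    unfolding block_offset_def sum_list_comprehension by (rule sum_list_distinct_conv_sum_set) simp
  also have "set (filter (\<lambda>j. \<sigma> ! j < \<sigma> ! i) [0..<length \<sigma>]) = {j. j < length \<sigma> \<and> \<sigma>!j < \<sigma>!i}"
    by auto
  finally show ?thesis .
qed

lemma block_offset_end_mono:
  assumes "insert i {j. j < length \<sigma> \<and> \<sigma>!j < \<sigma>!i} \<subseteq> B" and "finite B"
  shows "block_offset \<sigma> \<alpha>s i + length (\<alpha>s ! i) \<le> (\<Sum>j\<in>B. length (\<alpha>s ! j))"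
proof -
  let ?A = "{j. j < length \<sigma> \<and> \<sigma>!j < \<sigma>!i}"
  have "block_offset \<sigma> \<alpha>s i + length (\<alpha>s ! i) = (\<Sum>j\<in>insert i ?A. length (\<alpha>s ! j))"
    unfolding block_offset_sum by (subst sum.insert) auto
  also have "\<dots> \<le> (\<Sum>j\<in>B. length (\<alpha>s ! j))"
    using assms by (intro sum_mono2) auto
  finally show ?thesis .
qed

lemma block_offset_less:
  assumes "i < length \<sigma>" "j < length \<sigma>" "\<sigma>!i < \<sigma>!j"
  shows "block_offset \<sigma> \<alpha>s i + length (\<alpha>s ! i) \<le> block_offset \<sigma> \<alpha>s j"
  unfolding block_offset_sum[of \<sigma> \<alpha>s j] using assms by (intro block_offset_end_mono) auto

lemma block_offset_bound:
  assumes "i < length \<sigma>"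
  shows "block_offset \<sigma> \<alpha>s i + length (\<alpha>s ! i) \<le> (\<Sum>k<length \<sigma>. length (\<alpha>s ! k))"
  using assms by (intro block_offset_end_mono) auto

lemma length_inflate: "length (inflate \<sigma> \<alpha>s) = (\<Sum>k<length \<sigma>. length (\<alpha>s ! k))"
  unfolding inflate_blocks length_concat map_map block_def
  by (simp add: comp_def interv_sum_list_conv_sum_set_nat lessThan_atLeast0)

lemma set_block:
  assumes "is_perm (\<alpha>s ! i)"
  shows "set (block \<sigma> \<alpha>s i) = {block_offset \<sigma> \<alpha>s i..<block_offset \<sigma> \<alpha>s i + length (\<alpha>s ! i)}"
proof -
  have "set (block \<sigma> \<alpha>s i) = (\<lambda>v. v + block_offset \<sigma> \<alpha>s i) ` {0..<length (\<alpha>s ! i)}"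
    using assms unfolding block_def is_perm_def by simp
  then show ?thesis by (simp add: image_add_atLeastLessThan' add.commute)
qed

lemma block_boundary:
  assumes "is_perm \<sigma>" and "\<forall>\<alpha>\<in>set \<alpha>s. is_perm \<alpha> \<and> \<alpha> \<noteq> []" and "length \<alpha>s = length \<sigma>"
    and "i + 1 < length \<sigma>"
  shows "(last (block \<sigma> \<alpha>s i) < hd (block \<sigma> \<alpha>s (i+1))) = (\<sigma>!i < \<sigma>!(i+1))"
proof -
  have blocks: "is_perm (\<alpha>s ! k)" "\<alpha>s ! k \<noteq> []" if "k < length \<sigma>" for k
    using assms(2,3) that by auto
  have "last (block \<sigma> \<alpha>s i) \<in> set (block \<sigma> \<alpha>s i)" "hd (block \<sigma> \<alpha>s (i+1)) \<in> set (block \<sigma> \<alpha>s (i+1))"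
    using blocks(2) assms(4) by (simp_all add: block_def last_map hd_map)
  moreover have "\<sigma>!i \<noteq> \<sigma>!(i+1)"
    using perm_distinct[OF assms(1)] assms(4) by (simp add: nth_eq_iff_index_eq)
  ultimately show ?thesis
    using set_block[OF blocks(1)] assms(4)
      block_offset_less[of i \<sigma> "i+1" \<alpha>s] block_offset_less[of "i+1" \<sigma> i \<alpha>s]
    by (cases "\<sigma>!i < \<sigma>!(i+1)") fastforce+
qed

section \<open>Inflations of permutations\<close>

lemma distinct_concat_map:
  assumes "distinct ks" and "\<And>k. k \<in> set ks \<Longrightarrow> distinct (f k)"
    and "\<And>k l. k \<in> set ks \<Longrightarrow> l \<in> set ks \<Longrightarrow> k \<noteq> l \<Longrightarrow> set (f k) \<inter> set (f l) = {}"
  shows "distinct (concat (map f ks))"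
  using assms by (induction ks) (auto simp: disjoint_iff)

lemma inflate_is_perm:
  assumes "is_perm \<sigma>" and "length \<alpha>s = length \<sigma>" and "\<forall>\<alpha>\<in>set \<alpha>s. is_perm \<alpha> \<and> \<alpha> \<noteq> []"
  shows "is_perm (inflate \<sigma> \<alpha>s)"
proof -
  let ?N = "\<Sum>k<length \<sigma>. length (\<alpha>s ! k)"
  have blocks: "is_perm (\<alpha>s ! i)" if "i < length \<sigma>" for i
    using assms(2,3) that by auto
  have "distinct (inflate \<sigma> \<alpha>s)"
    unfolding inflate_blocks
  proof (rule distinct_concat_map)
    show "distinct (block \<sigma> \<alpha>s i)" if "i \<in> set [0..<length \<sigma>]" for i
      using perm_distinct[OF blocks] that by (simp add: block_def distinct_map)
    show "set (block \<sigma> \<alpha>s i) \<inter> set (block \<sigma> \<alpha>s j) = {}"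
      if "i \<in> set [0..<length \<sigma>]" "j \<in> set [0..<length \<sigma>]" "i \<noteq> j" for i j
    proof -
      have ij: "i < length \<sigma>" "j < length \<sigma>" using that by auto
      have "\<sigma>!i \<noteq> \<sigma>!j" using perm_distinct[OF assms(1)] ij that(3) by (simp add: nth_eq_iff_index_eq)
      then consider "\<sigma>!i < \<sigma>!j" | "\<sigma>!j < \<sigma>!i" by linarith
      then show ?thesis
      proof cases
        case 1
        then show ?thesis using block_offset_less[OF ij 1, of \<alpha>s] by (auto simp: set_block blocks ij)
      next
        case 2
        then show ?thesis using block_offset_less[OF ij(2,1) 2, of \<alpha>s] by (auto simp: set_block blocks ij)
      qed
    qed
  qed simp
  moreover have "set (inflate \<sigma> \<alpha>s) \<subseteq> {0..<?N}"
  proof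
    fix x assume "x \<in> set (inflate \<sigma> \<alpha>s)"
    then obtain i where "i < length \<sigma>" "x \<in> set (block \<sigma> \<alpha>s i)"
      unfolding inflate_blocks by auto
    then show "x \<in> {0..<?N}"
      using set_block[OF blocks] block_offset_bound[of i \<sigma> \<alpha>s] by auto
  qed
  ultimately have "set (inflate \<sigma> \<alpha>s) = {0..<?N}"
    using card_subset_eq[of "{0..<?N}"] distinct_card length_inflate by (metis card_atLeastLessThan
        diff_zero finite_atLeastLessThan)
  then show ?thesis
    unfolding is_perm_def using \<open>distinct _\<close> length_inflate by metis
qed

lemma inflate_nonempty:
  assumes "length \<sigma> > 0" and "length \<alpha>s = length \<sigma>" and "\<forall>\<alpha>\<in>set \<alpha>s. \<alpha> \<noteq> []"
  shows "inflate \<sigma> \<alpha>s \<noteq> []"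
proof -
  have "block \<sigma> \<alpha>s 0 \<noteq> []" and "0 \<in> set [0..<length \<sigma>]"
    using assms by (auto simp: block_def)
  then show ?thesis
    unfolding inflate_blocks by force
qed

lemma profile_inflate:
  assumes "is_perm \<sigma>"
    and "length \<alpha>s = length \<sigma>" "\<forall>\<alpha>\<in>set \<alpha>s. is_perm \<alpha> \<and> \<alpha> \<noteq> []"
    and "length \<beta>s = length \<sigma>" "\<forall>\<beta>\<in>set \<beta>s. is_perm \<beta> \<and> \<beta> \<noteq> []"
    and "\<forall>i < length \<sigma>. profile (ascents (\<alpha>s ! i)) = profile (ascents (\<beta>s ! i))"
  shows "profile (ascents (inflate \<sigma> \<alpha>s)) = profile (ascents (inflate \<sigma> \<beta>s))"
  unfolding inflate_blocks
proof (rule profile_ascents_concat)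
  show "list_all2 (\<lambda>b c. b \<noteq> [] \<and> c \<noteq> [] \<and> profile (ascents b) = profile (ascents c))
          (map (block \<sigma> \<alpha>s) [0..<length \<sigma>]) (map (block \<sigma> \<beta>s) [0..<length \<sigma>])"
    using assms(2-6) by (auto simp: list_all2_conv_all_nth block_def ascents_shift)
  show "\<forall>i. i + 1 < length (map (block \<sigma> \<alpha>s) [0..<length \<sigma>]) \<longrightarrow>
          (last (map (block \<sigma> \<alpha>s) [0..<length \<sigma>] ! i) < hd (map (block \<sigma> \<alpha>s) [0..<length \<sigma>] ! (i+1)))
        = (last (map (block \<sigma> \<beta>s) [0..<length \<sigma>] ! i) < hd (map (block \<sigma> \<beta>s) [0..<length \<sigma>] ! (i+1)))"
    using block_boundary[OF assms(1,3,2)] block_boundary[OF assms(1,5,4)]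
    by (simp del: upt_Suc)
qed

theorem mainTheorem4:
  shows "query_complete {AL, BR, ER, {[0]}}"
  unfolding query_complete_def
proof (intro allI impI, elim conjE)
  fix \<sigma> P \<alpha>s \<beta>s
  assume "simple_perm \<sigma>" "P \<in> {AL, BR, ER, {[0]}}"
    and \<alpha>s: "length \<alpha>s = length \<sigma>" "\<forall>\<alpha> \<in> set \<alpha>s. is_perm \<alpha> \<and> \<alpha> \<noteq> []"
    and \<beta>s: "length \<beta>s = length \<sigma>" "\<forall>\<beta> \<in> set \<beta>s. is_perm \<beta> \<and> \<beta> \<noteq> []"
    and same_properties: "\<forall>i < length \<sigma>. \<forall>Q \<in> {AL, BR, ER, {[0]}}. \<alpha>s ! i \<in> Q \<longleftrightarrow> \<beta>s ! i \<in> Q"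
  have \<sigma>: "is_perm \<sigma>" using \<open>simple_perm \<sigma>\<close> unfolding simple_perm_def by simp
  show "inflate \<sigma> \<alpha>s \<in> P \<longleftrightarrow> inflate \<sigma> \<beta>s \<in> P"
  proof (cases "length \<sigma> = 0")
    case True
    then show ?thesis unfolding inflate_def by simp
  next
    case False
    have "profile (ascents (\<alpha>s ! i)) = profile (ascents (\<beta>s ! i))" if "i < length \<sigma>" for i
      using that \<alpha>s \<beta>s same_properties by (intro profile_determined_by_properties) auto
    then have "profile (ascents (inflate \<sigma> \<alpha>s)) = profile (ascents (inflate \<sigma> \<beta>s))"
      using profile_inflate[OF \<sigma> \<alpha>s \<beta>s] by blast
    moreover have "inflate \<sigma> \<alpha>s \<noteq> []" "inflate \<sigma> \<beta>s \<noteq> []"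
      using inflate_nonempty False \<alpha>s \<beta>s by auto
    ultimately show ?thesis
      using properties_determined_by_profile \<open>P \<in> _\<close>
        inflate_is_perm[OF \<sigma> \<alpha>s] inflate_is_perm[OF \<sigma> \<beta>s] by blast
  qed
qed

end
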